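(* Let $m\ge1$ and let $P_1\ge\dots\ge P_{2^m}>0$ be the probabilities of i.i.d. input words $\mathbf{w}_1,\dots,\mathbf{w}_{2^m}$, and $P_1^d\ge\dots\ge P^d_{2^m}>0$. After $t$ data words, let $\mathbf{n}^e(t)=(n_1^e(t),\dots,n^e_{2^m}(t))$ be the vector of counts of the input words, so that $$P(\mathbf{n}^e(t))=\binom{t}{n^e_1(t),\ldots,n^e_{2^m}(t)}P_1^{n^e_1(t)}\cdots P_{2^m}^{n^e_{2^m}(t)},$$ and assume the first $t$ words are encoded and decoded correctly, so the decoder counts equal $\mathbf{n}^e(t)$. Call a count vector stable if $n^e_1(t)>n^e_2(t)>\dots>n^e_{2^m}(t)$. For a stable count vector $\mathbf{n}$, with $N_i=n_i-n_{i+1}$, define $$A(\mathbf{n})=4-\prod_{i=1}^{2^{m-1}}\left(1-\left(\tfrac{P_{2i}}{P_{2i-1}}\right)^{N_{2i-1}}\right)-\prod_{i=1}^{2^{m-1}-1}\left(1-\left(\tfrac{P_{2i+1}}{P_{2i}}\right)^{N_{2i}}\right)-\prod_{i=1}^{2^{m-1}}\left(1-\left(\tfrac{P^d_{2i}}{P^d_{2i-1}}\right)^{N_{2i-1}}\right)-\prod_{i=1}^{2^{m-1}-1}\left(1-\left(\tfrac{P^d_{2i+1}}{P^d_{2i}}\right)^{N_{2i}}\right).$$ Assume that, conditioned on a stable count vector $\mathbf{n}^e(t)=\mathbf{n}$, the probability that a recurrence (two adjacent encoder counts, or two adjacent decoder counts, becoming equal at some future time) occurs is at most $A(\mathbf{n})$.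 Let $P(t)$ be the probability that the dictionary will be unstable, i.e. that $\mathbf{n}^e(t)$ is not stable or a recurrence occurs after time $t$. Then $$P(t)\le\sum_{\mathbf{n}^e(t)\ \text{stable}}A(\mathbf{n}^e(t))P(\mathbf{n}^e(t))+\sum_{\mathbf{n}^e(t)\ \text{not stable}}P(\mathbf{n}^e(t)).$$
   Context: Setting: a rate-1 SLC direct shaping code with parsing length $m$: the encoder keeps the $2^m$ input words ordered by their occurrence counts and maps the word in position $k$ to the $k$th output codeword of a fixed list ordered by nondecreasing cost (number of zeros); the decoder rebuilds the same ordering from the decoded words. Codewords pass through a binary symmetric channel with crossover probability $\rho$, and $P_i^d=\sum_j\rho^{d(i,j)}(1-\rho)^{m-d(i,j)}P_j$ with $d$ the Hamming distance. The conditional bound by $A(\mathbf{n})$ is the paper's Lemma on recurrence of a stable dictionary, stated here as a hypothesis. *)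

theory Defs
  imports "HOL-Probability.Probability"
begin

text \<open>Words are indexed by 1..K with K = 2^m. A count vector is a function
  nat => nat supported on 1..K.\<close>

definition count_vectors :: "nat \<Rightarrow> nat \<Rightarrow> (nat \<Rightarrow> nat) set" where
  "count_vectors K t = {n. (\<forall>i. i \<notin> {1..K} \<longrightarrow> n i = 0) \<and> (\<Sum>i=1..K. n i) = t}"

definition stable :: "nat \<Rightarrow> (nat \<Rightarrow> nat) \<Rightarrow> bool" where
  "stable K n \<longleftrightarrow> (\<forall>i\<in>{1..<K}. n i > n (Suc i))"

definition multinom_prob :: "nat \<Rightarrow> (nat \<Rightarrow> real) \<Rightarrow> nat \<Rightarrow> (nat \<Rightarrow> nat) \<Rightarrow> real" where
  "multinom_prob K P t n =
     fact t / (\<Prod>i=1..K. fact (n i)) * (\<Prod>i=1..K. P i ^ n i)"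

definition word_counts :: "nat \<Rightarrow> nat \<Rightarrow> (nat \<Rightarrow> 'a \<Rightarrow> nat) \<Rightarrow> 'a \<Rightarrow> nat \<Rightarrow> nat" where
  "word_counts K t W \<omega> = (\<lambda>i. if i \<in> {1..K} then card {s. s < t \<and> W s \<omega> = i} else 0)"

definition A_bound :: "nat \<Rightarrow> (nat \<Rightarrow> real) \<Rightarrow> (nat \<Rightarrow> real) \<Rightarrow> (nat \<Rightarrow> nat) \<Rightarrow> real" where
  "A_bound m P Pd n =
    (let N = (\<lambda>i. n i - n (Suc i)) in
     4 - (\<Prod>i=1..2^(m-1). 1 - (P (2*i) / P (2*i-1)) ^ N (2*i-1))
       - (\<Prod>i=1..2^(m-1)-1. 1 - (P (2*i+1) / P (2*i)) ^ N (2*i))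
       - (\<Prod>i=1..2^(m-1). 1 - (Pd (2*i) / Pd (2*i-1)) ^ N (2*i-1))
       - (\<Prod>i=1..2^(m-1)-1. 1 - (Pd (2*i+1) / Pd (2*i)) ^ N (2*i)))"

definition hamming :: "bool list \<Rightarrow> bool list \<Rightarrow> nat" where
  "hamming u v = card {k. k < length u \<and> u ! k \<noteq> v ! k}"

end

(* Given the first t words, the event that the count vector equals n is the disjoint union
   of the events that the word sequence is one of the t!/(n_1!...n_K!) arrangements with
   those counts, each of probability P_1^n_1...P_K^n_K: the counts are multinomial.  Since
   the P_i sum to 1, almost surely every word lies in 1..K, so the bad event splits over the
   finitely many count vectors.  On a stable count vector the recurrence hypothesis bounds
   its part by A(n)P(n); on an unstable one it is at most P(n). *)

theory Submission
  imports Defs "HOL-Combinatorics.Multiset_Permutations"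
begin

lemma prod_list_map_eq_prod_power_count_list:
  fixes f :: "'a \<Rightarrow> 'b::comm_monoid_mult"
  assumes "finite A" and "set ws \<subseteq> A"
  shows "prod_list (map f ws) = (\<Prod>i\<in>A. f i ^ count_list ws i)"
  using assms(2)
proof (induction ws)
  case (Cons x ws)
  have "(\<Prod>i\<in>A. f i ^ count_list (x # ws) i) = (\<Prod>i\<in>A. f i ^ count_list ws i * (if i = x then f i else 1))"
    by (intro prod.cong) (auto simp: mult.commute)
  also have "\<dots> = f x * (\<Prod>i\<in>A. f i ^ count_list ws i)"
    using Cons.prems assms(1) by (simp add: prod.distrib prod.delta' mult.commute)
  finally show ?case using Cons by (simp add: mult.commute)
qed simp

lemma sum_prod_list_lists_length:
  fixes f :: "'a \<Rightarrow> 'b::comm_semiring_1"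
  assumes "finite A"
  shows "(\<Sum>ws\<in>{ws. set ws \<subseteq> A \<and> length ws = t}. prod_list (map f ws)) = sum f A ^ t"
proof (induction t)
  case 0
  have "{ws. set ws \<subseteq> A \<and> length ws = 0} = {[]}" by auto
  then show ?case by simp
next
  case (Suc t)
  let ?L = "{ws. set ws \<subseteq> A \<and> length ws = t}"
  have lists_Suc: "{ws. set ws \<subseteq> A \<and> length ws = Suc t} = (\<lambda>(a, ws). a # ws) ` (A \<times> ?L)"
    by (auto simp: length_Suc_conv image_iff)
  have "inj_on (\<lambda>(a, ws). a # ws) (A \<times> ?L)"
    by (auto simp: inj_on_def)
  then have "(\<Sum>ws\<in>{ws. set ws \<subseteq> A \<and> length ws = Suc t}. prod_list (map f ws))
      = (\<Sum>(a, ws)\<in>A \<times> ?L. f a * prod_list (map f ws))"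
    unfolding lists_Suc by (simp add: sum.reindex case_prod_unfold)
  also have "\<dots> = (\<Sum>a\<in>A. f a * (\<Sum>ws\<in>?L. prod_list (map f ws)))"
    by (simp add: sum.cartesian_product sum_distrib_left)
  also have "\<dots> = sum f A ^ Suc t"
    by (simp add: Suc sum_distrib_right)
  finally show ?case .
qed

lemma sum_count_list_eq_length_iff:
  assumes "finite A"
  shows "(\<Sum>i\<in>A. count_list ws i) = length ws \<longleftrightarrow> set ws \<subseteq> A"
proof -
  let ?inA = "filter (\<lambda>x. x \<in> A) ws"
  have "(\<Sum>i\<in>A. count_list ws i) = (\<Sum>i\<in>A. count_list ?inA i)"
    by (intro sum.cong refl) (induction ws, auto)
  also have "\<dots> = length ?inA"
    using assms by (intro sum_count_set) auto
  finally have "(\<Sum>i\<in>A. count_list ws i) = length ?inA" .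
  moreover have "length ?inA = length ws \<longleftrightarrow> set ws \<subseteq> A"
    by (metis filter_True length_filter_less less_irrefl subsetD subsetI)
  ultimately show ?thesis by simp
qed

lemma count_list_eq_conv_permutations_of_multiset:
  assumes "finite A" and "\<And>i. i \<notin> A \<Longrightarrow> n i = 0"
  shows "{ws. count_list ws = n} = permutations_of_multiset (\<Sum>i\<in>A. replicate_mset (n i) i)"
proof -
  have "count (\<Sum>i\<in>A. replicate_mset (n i) i) = n"
    using assms by (auto simp: count_sum fun_eq_iff)
  then show ?thesis
    by (auto simp: permutations_of_multiset_def fun_eq_iff multiset_eq_iff count_mset)
qed

lemma card_count_list_eq:
  assumes "finite A" and "\<And>i. i \<notin> A \<Longrightarrow> n i = 0"
  shows "card {ws. count_list ws = n} * (\<Prod>i\<in>A. fact (n i)) = fact (\<Sum>i\<in>A. n i)"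
proof -
  define N where "N = (\<Sum>i\<in>A. replicate_mset (n i) i)"
  have count_N: "count N = n"
    using assms by (auto simp: N_def count_sum fun_eq_iff)
  have "set_mset N \<subseteq> A"
    using assms(2) count_N by (metis count_eq_zero_iff subsetI)
  then have "(\<Prod>i\<in>set_mset N. fact (n i)) = (\<Prod>i\<in>A. fact (n i) :: nat)"
    using assms count_N by (intro prod.mono_neutral_left) (auto simp flip: count_eq_zero_iff)
  moreover have "size N = (\<Sum>i\<in>A. n i)"
    by (simp add: N_def)
  moreover have "{ws. count_list ws = n} = permutations_of_multiset N"
    unfolding N_def using assms by (rule count_list_eq_conv_permutations_of_multiset)
  ultimately show ?thesis
    using card_permutations_of_multiset_aux[of N] by (simp add: count_N)
qed

lemma count_list_in_count_vectors_iff: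
  "count_list ws \<in> count_vectors K t \<longleftrightarrow> set ws \<subseteq> {1..K} \<and> length ws = t"
proof
  assume "count_list ws \<in> count_vectors K t"
  then have zero: "\<And>i. i \<notin> {1..K} \<Longrightarrow> count_list ws i = 0" and sum: "(\<Sum>i=1..K. count_list ws i) = t"
    by (simp_all add: count_vectors_def)
  have "set ws \<subseteq> {1..K}"
  proof
    fix x assume "x \<in> set ws"
    then show "x \<in> {1..K}"
      using zero by (metis count_list_0_iff)
  qed
  with sum show "set ws \<subseteq> {1..K} \<and> length ws = t"
    using sum_count_set[of ws "{1..K}"] by simp
next
  assume ws: "set ws \<subseteq> {1..K} \<and> length ws = t"
  then have "\<And>i. i \<notin> {1..K} \<Longrightarrow> count_list ws i = 0"
    by (meson count_notin subsetD)
  with ws show "count_list ws \<in> count_vectors K t"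
    using sum_count_set[of ws "{1..K}"] by (simp add: count_vectors_def)
qed

lemma sum_prod_list_count_list_eq_multinom_prob:
  fixes P :: "nat \<Rightarrow> real"
  assumes "n \<in> count_vectors K t"
  shows "(\<Sum>ws\<in>{ws. count_list ws = n}. prod_list (map P ws)) = multinom_prob K P t n"
proof -
  have n_zero: "\<And>i. i \<notin> {1..K} \<Longrightarrow> n i = 0" and n_sum: "(\<Sum>i=1..K. n i) = t"
    using assms by (auto simp: count_vectors_def)
  have "prod_list (map P ws) = (\<Prod>i=1..K. P i ^ n i)" if "count_list ws = n" for ws
  proof -
    have "set ws \<subseteq> {1..K}"
      using assms that count_list_in_count_vectors_iff[of ws K t] by simp
    then show ?thesis
      using that prod_list_map_eq_prod_power_count_list[of "{1..K}" ws P] by simp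
  qed
  then have "(\<Sum>ws\<in>{ws. count_list ws = n}. prod_list (map P ws))
      = (\<Sum>ws\<in>{ws. count_list ws = n}. \<Prod>i=1..K. P i ^ n i)"
    by (intro sum.cong) auto
  also have "\<dots> = real (card {ws. count_list ws = n}) * (\<Prod>i=1..K. P i ^ n i)"
    by simp
  also have "real (card {ws. count_list ws = n}) = fact t / (\<Prod>i=1..K. fact (n i))"
  proof -
    have "card {ws. count_list ws = n} * (\<Prod>i=1..K. fact (n i)) = (fact t :: nat)"
      using card_count_list_eq[of "{1..K}" n, OF _ n_zero] n_sum by simp
    then have "real (card {ws. count_list ws = n} * (\<Prod>i=1..K. fact (n i))) = fact t"
      by simp
    then have "real (card {ws. count_list ws = n}) * (\<Prod>i=1..K. fact (n i)) = fact t"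
      by (simp add: of_nat_prod)
    then show ?thesis
      by (simp add: eq_divide_eq)
  qed
  finally show ?thesis
    by (simp add: multinom_prob_def)
qed

lemma count_list_map_upt: "count_list (map f [0..<t]) i = card {s. s < t \<and> f s = i}"
  by (auto simp: count_list_eq_length_filter length_filter_conv_card intro!: arg_cong[where f = card])

lemma word_counts_eq_count_list:
  "word_counts K t W \<omega> i = (if i \<in> {1..K} then count_list (map (\<lambda>s. W s \<omega>) [0..<t]) i else 0)"
  by (simp add: word_counts_def count_list_map_upt)

lemma word_counts_in_count_vectors_iff:
  "word_counts K t W \<omega> \<in> count_vectors K t \<longleftrightarrow> set (map (\<lambda>s. W s \<omega>) [0..<t]) \<subseteq> {1..K}"
  using sum_count_list_eq_length_iff[of "{1..K}" "map (\<lambda>s. W s \<omega>) [0..<t]"]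
  by (simp add: count_vectors_def word_counts_eq_count_list)

lemma word_counts_eq_iff_count_list:
  assumes "n \<in> count_vectors K t"
  shows "word_counts K t W \<omega> = n \<longleftrightarrow> count_list (map (\<lambda>s. W s \<omega>) [0..<t]) = n"
proof
  let ?ws = "map (\<lambda>s. W s \<omega>) [0..<t]"
  assume counts: "word_counts K t W \<omega> = n"
  then have in_range: "set ?ws \<subseteq> {1..K}"
    using assms word_counts_in_count_vectors_iff by metis
  show "count_list ?ws = n"
  proof
    fix i
    show "count_list ?ws i = n i"
    proof (cases "i \<in> {1..K}")
      case True
      then show ?thesis
        using fun_cong[OF counts, of i] by (simp add: word_counts_eq_count_list)
    next
      case False
      then have "i \<notin> set ?ws"
        using in_range by blast
      then show ?thesis
        using False assms by (simp add: count_vectors_def)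
    qed
  qed
next
  assume "count_list (map (\<lambda>s. W s \<omega>) [0..<t]) = n"
  then show "word_counts K t W \<omega> = n"
    using assms by (auto simp: fun_eq_iff word_counts_eq_count_list count_vectors_def)
qed

lemma finite_count_vectors: "finite (count_vectors K t)"
proof (rule finite_subset)
  show "count_vectors K t \<subseteq> {n. \<forall>i. (i \<in> {1..K} \<longrightarrow> n i \<in> {0..t}) \<and> (i \<notin> {1..K} \<longrightarrow> n i = 0)}"
  proof safe
    fix n i assume n: "n \<in> count_vectors K t" and i: "i \<in> {1..K}"
    have "n i \<le> (\<Sum>j=1..K. n j)"
      using i by (intro member_le_sum) auto
    then show "n i \<in> {0..t}"
      using n by (simp add: count_vectors_def)
  qed (auto simp: count_vectors_def)
qed (rule finite_set_of_finite_funs; simp)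

lemma (in prob_space) prob_eq_sum_prob_partition:
  assumes "finite V" and "prob {\<omega> \<in> space M. X \<omega> \<in> V} = 1"
    and "\<And>v. v \<in> V \<Longrightarrow> {\<omega> \<in> space M. X \<omega> = v} \<in> events"
    and "{\<omega> \<in> space M. Q \<omega>} \<in> events"
  shows "prob {\<omega> \<in> space M. Q \<omega>} = (\<Sum>v\<in>V. prob {\<omega> \<in> space M. Q \<omega> \<and> X \<omega> = v})"
proof -
  have X_in_V: "{\<omega> \<in> space M. X \<omega> \<in> V} = (\<Union>v\<in>V. {\<omega> \<in> space M. X \<omega> = v})"
    by auto
  have X_in_V_event: "{\<omega> \<in> space M. X \<omega> \<in> V} \<in> events"
    unfolding X_in_V using assms(1,3) by auto
  have "AE \<omega> in M. X \<omega> \<in> V"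
    using AE_prob_1[OF assms(2)] by eventually_elim auto
  then have "prob {\<omega> \<in> space M. Q \<omega>} = prob {\<omega> \<in> space M. Q \<omega> \<and> X \<omega> \<in> V}"
    using assms(4) X_in_V_event by (intro prob_eq_AE) (auto elim: eventually_mono)
  also have "{\<omega> \<in> space M. Q \<omega> \<and> X \<omega> \<in> V} = (\<Union>v\<in>V. {\<omega> \<in> space M. Q \<omega> \<and> X \<omega> = v})"
    by auto
  also have "prob \<dots> = (\<Sum>v\<in>V. prob {\<omega> \<in> space M. Q \<omega> \<and> X \<omega> = v})"
    using assms by (intro finite_measure_finite_Union) (auto simp: disjoint_family_on_def)
  finally show ?thesis .
qed

lemma (in prob_space) prob_conj_le_of_cond_prob_le:
  assumes "{\<omega> \<in> space M. E \<omega>} \<in> events"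
    and "prob {\<omega> \<in> space M. E \<omega>} > 0 \<Longrightarrow> cond_prob M Q E \<le> c"
  shows "prob {\<omega> \<in> space M. Q \<omega> \<and> E \<omega>} \<le> c * prob {\<omega> \<in> space M. E \<omega>}"
proof (cases "prob {\<omega> \<in> space M. E \<omega>} > 0")
  case True
  then show ?thesis
    using assms(2) by (simp add: cond_prob_def divide_le_eq)
next
  case False
  then have "prob {\<omega> \<in> space M. E \<omega>} = 0"
    using measure_nonneg[of M "{\<omega> \<in> space M. E \<omega>}"] by linarith
  moreover have "prob {\<omega> \<in> space M. Q \<omega> \<and> E \<omega>} \<le> prob {\<omega> \<in> space M. E \<omega>}"
    using assms(1) by (intro finite_measure_mono) auto
  ultimately show ?thesis
    by simp
qed

locale iid_words = prob_space M for M :: "'a measure" +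
  fixes W :: "nat \<Rightarrow> 'a \<Rightarrow> nat" and P :: "nat \<Rightarrow> real" and t :: nat
  assumes measurable_W [measurable]: "\<And>s. W s \<in> measurable M (count_space UNIV)"
    and prob_prefix_eq: "\<And>ws. length ws = t \<Longrightarrow>
      prob {\<omega> \<in> space M. \<forall>s<t. W s \<omega> = ws ! s} = (\<Prod>s<t. P (ws ! s))"
begin

definition words :: "'a \<Rightarrow> nat list" where
  "words \<omega> = map (\<lambda>s. W s \<omega>) [0..<t]"

lemma words_eq_iff: "length ws = t \<Longrightarrow> words \<omega> = ws \<longleftrightarrow> (\<forall>s<t. W s \<omega> = ws ! s)"
  by (auto simp: words_def list_eq_iff_nth_eq)

lemma measurable_words [measurable]: "words \<in> measurable M (count_space UNIV)"
  unfolding measurable_count_space_eq2_countable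
proof (intro conjI ballI)
  fix ws :: "nat list"
  show "words -` {ws} \<inter> space M \<in> events"
  proof (cases "length ws = t")
    case True
    then have "words -` {ws} \<inter> space M = {\<omega> \<in> space M. \<forall>s<t. W s \<omega> = ws ! s}"
      using words_eq_iff by auto
    then show ?thesis by simp
  next
    case False
    then have "words -` {ws} \<inter> space M = {}"
      by (auto simp: words_def)
    then show ?thesis by simp
  qed
qed simp

lemma prob_words_eq: "length ws = t \<Longrightarrow> prob {\<omega> \<in> space M. words \<omega> = ws} = prod_list (map P ws)"
  using prob_prefix_eq[of ws] words_eq_iff[of ws]
  by (simp add: prod.list_conv_set_nth atLeast0LessThan)

lemma prob_words_in:
  assumes "finite S" and "\<And>ws. ws \<in> S \<Longrightarrow> length ws = t"
  shows "prob {\<omega> \<in> space M. words \<omega> \<in> S} = (\<Sum>ws\<in>S. prod_list (map P ws))"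
proof -
  have "{\<omega> \<in> space M. words \<omega> \<in> S} = (\<Union>ws\<in>S. {\<omega> \<in> space M. words \<omega> = ws})"
    by auto
  also have "prob \<dots> = (\<Sum>ws\<in>S. prob {\<omega> \<in> space M. words \<omega> = ws})"
    using assms(1) by (intro finite_measure_finite_Union) (auto simp: disjoint_family_on_def)
  finally show ?thesis
    using assms(2) by (simp add: prob_words_eq)
qed

lemma prob_set_words_subset:
  assumes "finite A"
  shows "prob {\<omega> \<in> space M. set (words \<omega>) \<subseteq> A} = sum P A ^ t"
proof -
  let ?L = "{ws. set ws \<subseteq> A \<and> length ws = t}"
  have "{\<omega> \<in> space M. set (words \<omega>) \<subseteq> A} = {\<omega> \<in> space M. words \<omega> \<in> ?L}"
    by (auto simp: words_def)
  also have "prob \<dots> = (\<Sum>ws\<in>?L. prod_list (map P ws))"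
    using assms by (intro prob_words_in) (auto simp: finite_lists_length_eq)
  finally show ?thesis
    using assms by (simp add: sum_prod_list_lists_length)
qed

lemma word_counts_eq_conv_words:
  "n \<in> count_vectors K t \<Longrightarrow>
    {\<omega> \<in> space M. word_counts K t W \<omega> = n} = {\<omega> \<in> space M. words \<omega> \<in> {ws. count_list ws = n}}"
  by (auto simp: words_def word_counts_eq_iff_count_list)

lemma word_counts_events: "{\<omega> \<in> space M. \<Phi> (word_counts K t W \<omega>)} \<in> events"
proof -
  have "word_counts K t W \<omega> = (\<lambda>i. if i \<in> {1..K} then count_list (words \<omega>) i else 0)" for \<omega>
    by (auto simp: words_def word_counts_eq_count_list)
  then show ?thesis
    by simp
qed

lemma prob_word_counts_eq:
  assumes "n \<in> count_vectors K t"
  shows "prob {\<omega> \<in> space M. word_counts K t W \<omega> = n} = multinom_prob K P t n"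
proof -
  have "finite {ws. count_list ws = n}"
    using assms count_list_eq_conv_permutations_of_multiset[of "{1..K}" n]
    by (simp add: count_vectors_def)
  moreover have "length ws = t" if "count_list ws = n" for ws
    using assms that count_list_in_count_vectors_iff[of ws K t] by simp
  ultimately have "prob {\<omega> \<in> space M. words \<omega> \<in> {ws. count_list ws = n}}
      = (\<Sum>ws\<in>{ws. count_list ws = n}. prod_list (map P ws))"
    by (intro prob_words_in) auto
  then show ?thesis
    using assms by (simp only: word_counts_eq_conv_words sum_prod_list_count_list_eq_multinom_prob)
qed

lemma prob_word_counts_in_count_vectors:
  assumes "(\<Sum>i=1..K. P i) = 1"
  shows "prob {\<omega> \<in> space M. word_counts K t W \<omega> \<in> count_vectors K t} = 1"
  using prob_set_words_subset[of "{1..K}"] assms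
  by (simp add: word_counts_in_count_vectors_iff words_def)

lemma prob_bad_and_word_counts_eq_le:
  assumes "n \<in> count_vectors K t"
    and "S n \<Longrightarrow> prob {\<omega> \<in> space M. word_counts K t W \<omega> = n} > 0 \<Longrightarrow>
      cond_prob M R (\<lambda>\<omega>. word_counts K t W \<omega> = n) \<le> c"
  shows "prob {\<omega> \<in> space M. (\<not> S (word_counts K t W \<omega>) \<or> R \<omega>) \<and> word_counts K t W \<omega> = n}
    \<le> (if S n then c * multinom_prob K P t n else multinom_prob K P t n)"
proof (cases "S n")
  case True
  then have "{\<omega> \<in> space M. (\<not> S (word_counts K t W \<omega>) \<or> R \<omega>) \<and> word_counts K t W \<omega> = n}
      = {\<omega> \<in> space M. R \<omega> \<and> word_counts K t W \<omega> = n}"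
    by auto
  moreover have "prob {\<omega> \<in> space M. R \<omega> \<and> word_counts K t W \<omega> = n}
      \<le> c * prob {\<omega> \<in> space M. word_counts K t W \<omega> = n}"
    using assms(2) True
    by (intro prob_conj_le_of_cond_prob_le word_counts_events[of "\<lambda>v. v = n"]) auto
  ultimately show ?thesis
    using True assms(1) by (simp add: prob_word_counts_eq)
next
  case False
  have "prob {\<omega> \<in> space M. (\<not> S (word_counts K t W \<omega>) \<or> R \<omega>) \<and> word_counts K t W \<omega> = n}
      \<le> prob {\<omega> \<in> space M. word_counts K t W \<omega> = n}"
    using word_counts_events by (intro finite_measure_mono) auto
  then show ?thesis
    using False assms(1) by (simp add: prob_word_counts_eq)
qed

end

theorem theorem3:
  fixes M :: "'a measure"
    and m t :: nat
    and P Pd :: "nat \<Rightarrow> real"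
    and \<rho> :: real
    and cw :: "nat \<Rightarrow> bool list"
    and W :: "nat \<Rightarrow> 'a \<Rightarrow> nat"
    and R :: "'a \<Rightarrow> bool"
  assumes "prob_space M"
    and "m \<ge> 1"
    and P_pos: "\<forall>i\<in>{1..2^m}. P i > 0"
    and P_dec: "\<forall>i\<in>{1..<2^m}. P i \<ge> P (Suc i)"
    and P_sum: "(\<Sum>i=1..2^m. P i) = 1"
    and cw_len: "\<forall>i\<in>{1..2^m}. length (cw i) = m"
    and cw_inj: "inj_on cw {1..2^m}"
    and rho: "0 \<le> \<rho>" "\<rho> \<le> 1"
    and Pd_def: "\<forall>i\<in>{1..2^m}. Pd i =
           (\<Sum>j=1..2^m. \<rho> ^ hamming (cw i) (cw j) * (1 - \<rho>) ^ (m - hamming (cw i) (cw j)) * P j)"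
    and Pd_pos: "\<forall>i\<in>{1..2^m}. Pd i > 0"
    and Pd_dec: "\<forall>i\<in>{1..<2^m}. Pd i \<ge> Pd (Suc i)"
    and W_meas: "\<forall>s. W s \<in> measurable M (count_space UNIV)"
    and W_iid: "\<forall>ws. length ws = t \<longrightarrow>
           prob_space.prob M {\<omega> \<in> space M. \<forall>s<t. W s \<omega> = ws ! s} = (\<Prod>s<t. P (ws ! s))"
    and R_meas: "{\<omega> \<in> space M. R \<omega>} \<in> sets M"
    and recurrence_bound: "\<forall>n\<in>count_vectors (2^m) t. stable (2^m) n \<longrightarrow>
           prob_space.prob M {\<omega> \<in> space M. word_counts (2^m) t W \<omega> = n} > 0 \<longrightarrow>
           cond_prob M R (\<lambda>\<omega>. word_counts (2^m) t W \<omega> = n) \<le> A_bound m P Pd n"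
  shows "prob_space.prob M {\<omega> \<in> space M. \<not> stable (2^m) (word_counts (2^m) t W \<omega>) \<or> R \<omega>}
         \<le> (\<Sum>n\<in>{n\<in>count_vectors (2^m) t. stable (2^m) n}. A_bound m P Pd n * multinom_prob (2^m) P t n)
           + (\<Sum>n\<in>{n\<in>count_vectors (2^m) t. \<not> stable (2^m) n}. multinom_prob (2^m) P t n)"
proof -
  \<comment> \<open>The channel model (cw, \<rho>, Pd) and the orderings of P and Pd enter only through
    the assumed recurrence bound.\<close>
  interpret iid_words M W P t
    using assms(1) W_meas W_iid by (simp add: iid_words_def iid_words_axioms_def)
  let ?wc = "word_counts (2^m) t W" and ?cv = "count_vectors (2^m) t"
    and ?P = "multinom_prob (2^m) P t"
  have "prob {\<omega> \<in> space M. \<not> stable (2^m) (?wc \<omega>) \<or> R \<omega>}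
      = (\<Sum>n\<in>?cv. prob {\<omega> \<in> space M. (\<not> stable (2^m) (?wc \<omega>) \<or> R \<omega>) \<and> ?wc \<omega> = n})"
    using finite_count_vectors prob_word_counts_in_count_vectors[OF P_sum] word_counts_events R_meas
    by (intro prob_eq_sum_prob_partition) auto
  also have "\<dots> \<le> (\<Sum>n\<in>?cv. if stable (2^m) n then A_bound m P Pd n * ?P n else ?P n)"
    using recurrence_bound by (intro sum_mono prob_bad_and_word_counts_eq_le) auto
  also have "\<dots> = (\<Sum>n\<in>{n\<in>?cv. stable (2^m) n}. A_bound m P Pd n * ?P n)
      + (\<Sum>n\<in>{n\<in>?cv. \<not> stable (2^m) n}. ?P n)"
    by (simp add: sum.If_cases finite_count_vectors Int_def)
  finally show ?thesis .
qed

end
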